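(* Let $G=(V,E)$ be a finite simple graph with at least one vertex and $k>0$ an integer. Let $\mathcal F$ be the set of all sets $\{(A_1,B_1),(A_2,B_2),(A_3,B_3)\}\subseteq\vec S_k$ (the three elements not necessarily distinct) with $G[A_1]\cup G[A_2]\cup G[A_3]=G$, and let $\mathcal F^*\subseteq\mathcal F$ be the set of those elements of $\mathcal F$ that are stars. Then every consistent orientation of $S_k$ that avoids $\mathcal F^*$ also avoids $\mathcal F$.
   Context: An oriented vertex separation of $G$ is an ordered pair $(A,B)$ with $A\cup B=V$ and no edge of $G$ between $A\setminus B$ and $B\setminus A$. These are partially ordered by $(A,B)\le(C,D)$ iff $A\subseteq C$ and $B\supseteq D$, with involution $(A,B)^*=(B,A)$. $\vec S_k$ is the set of oriented vertex separations $(A,B)$ with $|A\cap B|<k$, and $S_k$ the set of unordered pairs $\{(A,B),(B,A)\}$ with $(A,B)\in\vec S_k$. An orientation of $S_k$ is a set $O\subseteq\vec S_k$ containing exactly one of $(A,B),(B,A)$ for each such pair. $O$ is consistent if there are no distinct separations $r,s\in S_k$ with orientations $\vec r<\vec s$ such that $\vec r^{\,*},\vec s\in O$. A star is a nonempty set $\sigma$ of oriented separations with $\vec r\le\vec s^{\,*}$ for all distinct $\vec r,\vec s\in\sigma$. $O$ avoids a family $\mathcal F$ if no subset of $O$ lies in $\mathcal F$. $G[A]$ denotes the induced subgraph. *)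

theory Defs
  imports Main
begin

definition simple_graph :: "'a set \<Rightarrow> 'a set set \<Rightarrow> bool" where
  "simple_graph V E \<longleftrightarrow> finite V \<and> (\<forall>e\<in>E. card e = 2 \<and> e \<subseteq> V)"

type_synonym 'a sep = "'a set \<times> 'a set"

definition is_sep :: "'a set \<Rightarrow> 'a set set \<Rightarrow> 'a sep \<Rightarrow> bool" where
  "is_sep V E s \<longleftrightarrow> (case s of (A, B) \<Rightarrow>
     A \<union> B = V \<and> (\<forall>x\<in>A - B. \<forall>y\<in>B - A. {x, y} \<notin> E))"

definition inv_sep :: "'a sep \<Rightarrow> 'a sep" where
  "inv_sep s = (snd s, fst s)"

definition sep_le :: "'a sep \<Rightarrow> 'a sep \<Rightarrow> bool" where
  "sep_le s t \<longleftrightarrow> fst s \<subseteq> fst t \<and> snd t \<subseteq> snd s"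

definition sep_less :: "'a sep \<Rightarrow> 'a sep \<Rightarrow> bool" where
  "sep_less s t \<longleftrightarrow> sep_le s t \<and> s \<noteq> t"

definition Sk :: "'a set \<Rightarrow> 'a set set \<Rightarrow> nat \<Rightarrow> 'a sep set" where
  "Sk V E k = {s. is_sep V E s \<and> card (fst s \<inter> snd s) < k}"

definition is_orientation :: "'a set \<Rightarrow> 'a set set \<Rightarrow> nat \<Rightarrow> 'a sep set \<Rightarrow> bool" where
  "is_orientation V E k Or \<longleftrightarrow> Or \<subseteq> Sk V E k \<and>
     (\<forall>s\<in>Sk V E k. (s \<in> Or \<or> inv_sep s \<in> Or) \<and>
        (s \<noteq> inv_sep s \<longrightarrow> \<not> (s \<in> Or \<and> inv_sep s \<in> Or)))"

definition consistent :: "'a set \<Rightarrow> 'a set set \<Rightarrow> nat \<Rightarrow> 'a sep set \<Rightarrow> bool" where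
  "consistent V E k Or \<longleftrightarrow> \<not> (\<exists>r\<in>Sk V E k. \<exists>s\<in>Sk V E k.
     s \<noteq> r \<and> s \<noteq> inv_sep r \<and> sep_less r s \<and> inv_sep r \<in> Or \<and> s \<in> Or)"

definition is_star :: "'a sep set \<Rightarrow> bool" where
  "is_star \<sigma> \<longleftrightarrow> \<sigma> \<noteq> {} \<and> (\<forall>r\<in>\<sigma>. \<forall>s\<in>\<sigma>. r \<noteq> s \<longrightarrow> sep_le r (inv_sep s))"

definition avoids :: "'a sep set \<Rightarrow> 'a sep set set \<Rightarrow> bool" where
  "avoids Or F \<longleftrightarrow> (\<forall>\<sigma>. \<sigma> \<subseteq> Or \<longrightarrow> \<sigma> \<notin> F)"

definition induced :: "'a set set \<Rightarrow> 'a set \<Rightarrow> 'a set \<times> 'a set set" where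
  "induced E A = (A, {e\<in>E. e \<subseteq> A})"

definition graph_union :: "'a set \<times> 'a set set \<Rightarrow> 'a set \<times> 'a set set \<Rightarrow> 'a set \<times> 'a set set" where
  "graph_union G H = (fst G \<union> fst H, snd G \<union> snd H)"

definition F_cover :: "'a set \<Rightarrow> 'a set set \<Rightarrow> nat \<Rightarrow> 'a sep set set" where
  "F_cover V E k = {{s1, s2, s3} | s1 s2 s3.
     s1 \<in> Sk V E k \<and> s2 \<in> Sk V E k \<and> s3 \<in> Sk V E k \<and>
     graph_union (graph_union (induced E (fst s1)) (induced E (fst s2))) (induced E (fst s3)) = (V, E)}"

definition F_star :: "'a set \<Rightarrow> 'a set set \<Rightarrow> nat \<Rightarrow> 'a sep set set" where
  "F_star V E k = {\<sigma> \<in> F_cover V E k. is_star \<sigma>}"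

end

theory Submission
  imports Defs
begin

(* Suppose a consistent orientation O of S_k avoids all covering stars but
   contains a covering set sigma of at most three separations, i.e. the sides G[A] of the
   (A,B) in sigma together give G.  Choose such a sigma with minimal total weight, where
   the weight of (A,B) is |A| + |V - B|.  If sigma is a star we contradict the hypothesis.
   Otherwise there are distinct r = (A,B), s = (C,D) in sigma with not r <= s*.  By
   submodularity of the order |A \<inter> B| one of the two corners (A \<inter> D, B \<union> C) and
   (C \<inter> B, D \<union> A) again lies in S_k; say the first.  It lies strictly below r, so it is in
   O (O is down-closed, because consistency forbids r* and s in O with r < s, and the
   co-small case is excluded since O contains no separation (V,_)), and replacing r by it
   in sigma keeps the covering property, as every edge not inside D lies inside C.  The
   weight drops, contradicting minimality. *)

section \<open>Covering a graph by induced subgraphs\<close>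

text \<open>A family of vertex sets covers G if its members exhaust V and every edge lies
  inside one member; this is the graph-union condition of the family \<open>\<F>\<close>, but
  insensitive to repetitions and the order of the sets.\<close>
definition covers :: "'a set \<Rightarrow> 'a set set \<Rightarrow> 'a set set \<Rightarrow> bool" where
  "covers V E \<A> \<longleftrightarrow> \<Union>\<A> = V \<and> (\<forall>e\<in>E. \<exists>A\<in>\<A>. e \<subseteq> A)"

lemma graph_union_induced_iff_covers:
  assumes "simple_graph V E" and "A1 \<subseteq> V" "A2 \<subseteq> V" "A3 \<subseteq> V"
  shows "graph_union (graph_union (induced E A1) (induced E A2)) (induced E A3) = (V, E)
     \<longleftrightarrow> covers V E {A1, A2, A3}"
  using assms unfolding graph_union_def induced_def covers_def simple_graph_def by auto

lemma card_le_3_triple: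
  assumes "finite X" and "X \<noteq> {}" and "card X \<le> 3"
  obtains a b c where "X = {a, b, c}"
proof -
  have "card X = 1 \<or> card X = 2 \<or> card X = 3"
    using assms card_0_eq by fastforce
  then show thesis
    by (elim disjE) (auto simp: card_1_singleton_iff card_2_iff card_3_iff intro: that)
qed

lemma sep_sides_subset:
  assumes "is_sep V E s"
  shows "fst s \<subseteq> V" and "snd s \<subseteq> V"
  using assms unfolding is_sep_def by (auto split: prod.splits)

lemma F_cover_iff:
  assumes "simple_graph V E"
  shows "\<sigma> \<in> F_cover V E k \<longleftrightarrow>
    \<sigma> \<subseteq> Sk V E k \<and> finite \<sigma> \<and> \<sigma> \<noteq> {} \<and> card \<sigma> \<le> 3 \<and> covers V E (fst ` \<sigma>)"
proof -
  have side: "fst s \<subseteq> V" if "s \<in> Sk V E k" for s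
    using that sep_sides_subset unfolding Sk_def by blast
  have triple: "card {a, b, c} \<le> 3" for a b c :: "'a sep"
    by (auto simp: card_insert_if)
  show ?thesis
  proof
    assume "\<sigma> \<in> F_cover V E k"
    then obtain a b c where "\<sigma> = {a, b, c}" "a \<in> Sk V E k" "b \<in> Sk V E k" "c \<in> Sk V E k"
      and "graph_union (graph_union (induced E (fst a)) (induced E (fst b)))
             (induced E (fst c)) = (V, E)"
      unfolding F_cover_def by blast
    then show "\<sigma> \<subseteq> Sk V E k \<and> finite \<sigma> \<and> \<sigma> \<noteq> {} \<and> card \<sigma> \<le> 3 \<and> covers V E (fst ` \<sigma>)"
      using graph_union_induced_iff_covers[OF assms side side side] triple by auto
  next
    assume *: "\<sigma> \<subseteq> Sk V E k \<and> finite \<sigma> \<and> \<sigma> \<noteq> {} \<and> card \<sigma> \<le> 3 \<and> covers V E (fst ` \<sigma>)"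
    then obtain a b c where abc: "\<sigma> = {a, b, c}"
      using card_le_3_triple by blast
    have "a \<in> Sk V E k" "b \<in> Sk V E k" "c \<in> Sk V E k" using * abc by auto
    moreover have "graph_union (graph_union (induced E (fst a)) (induced E (fst b)))
        (induced E (fst c)) = (V, E)"
      using graph_union_induced_iff_covers[OF assms side side side] * abc calculation by simp
    ultimately show "\<sigma> \<in> F_cover V E k"
      unfolding F_cover_def using abc by blast
  qed
qed

section \<open>Separations and their corners\<close>

lemma edge_inside_side:
  assumes "simple_graph V E" and "is_sep V E (A, B)" and "e \<in> E" and "\<not> e \<subseteq> B"
  shows "e \<subseteq> A"
proof
  fix z assume z: "z \<in> e"
  obtain w where w: "w \<in> e" "w \<notin> B" using assms(4) by blast
  have union: "A \<union> B = V" and no_edge: "\<And>x y. x \<in> A - B \<Longrightarrow> y \<in> B - A \<Longrightarrow> {x, y} \<notin> E"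
    using assms(2) unfolding is_sep_def by auto
  have "e \<subseteq> V" and "card e = 2" using assms(1,3) unfolding simple_graph_def by auto
  show "z \<in> A"
  proof (rule ccontr)
    assume "z \<notin> A"
    then have zB: "z \<in> B - A" and wA: "w \<in> A - B"
      using union z w \<open>e \<subseteq> V\<close> by auto
    then have "e = {w, z}"
      using \<open>card e = 2\<close> w z by (auto simp: card_2_iff)
    then show False using no_edge[OF wA zB] assms(3) by simp
  qed
qed

text \<open>The corner of r and s: the infimum of r and the inverse of s.\<close>
definition corner :: "'a sep \<Rightarrow> 'a sep \<Rightarrow> 'a sep" where
  "corner r s = (fst r \<inter> snd s, snd r \<union> fst s)"

text \<open>Corners of separations are separations: an edge leaving A \<inter> D into B \<union> C
  would cross r or s.\<close>
lemma corner_is_sep: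
  assumes "is_sep V E r" and "is_sep V E s"
  shows "is_sep V E (corner r s)"
proof -
  obtain A B C D where rs: "r = (A, B)" "s = (C, D)" by fastforce
  have "A \<union> B = V" "C \<union> D = V"
    and r_no_edge: "\<And>x y. x \<in> A - B \<Longrightarrow> y \<in> B - A \<Longrightarrow> {x, y} \<notin> E"
    and s_no_edge: "\<And>x y. x \<in> C - D \<Longrightarrow> y \<in> D - C \<Longrightarrow> {x, y} \<notin> E"
    using assms unfolding rs is_sep_def by auto
  moreover have "{x, y} \<notin> E" if x: "x \<in> (A \<inter> D) - (B \<union> C)" and y: "y \<in> (B \<union> C) - (A \<inter> D)" for x y
  proof (cases "y \<in> A")
    case True
    with y \<open>A \<union> B = V\<close> \<open>C \<union> D = V\<close> have "y \<in> C - D" by blast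
    with x s_no_edge[of y x] show ?thesis by (auto simp: insert_commute)
  next
    case False
    with y \<open>A \<union> B = V\<close> \<open>C \<union> D = V\<close> have "y \<in> B - A" by blast
    with x r_no_edge show ?thesis by blast
  qed
  ultimately show ?thesis unfolding rs corner_def is_sep_def by auto
qed

lemma corner_le: "sep_le (corner r s) r"
  unfolding corner_def sep_le_def by auto

lemma corner_neq:
  assumes "\<not> sep_le r (inv_sep s)"
  shows "corner r s \<noteq> r"
  using assms unfolding corner_def sep_le_def inv_sep_def by (auto simp: prod_eq_iff)

lemma sep_le_inv_swap: "sep_le r (inv_sep s) \<longleftrightarrow> sep_le s (inv_sep r)"
  unfolding sep_le_def inv_sep_def by auto

lemma corner_order_submodular:
  assumes "finite (fst r \<inter> snd r)" and "finite (fst s \<inter> snd s)"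
  shows "card (fst (corner r s) \<inter> snd (corner r s)) + card (fst (corner s r) \<inter> snd (corner s r))
      \<le> card (fst r \<inter> snd r) + card (fst s \<inter> snd s)"
proof -
  let ?X = "fst (corner r s) \<inter> snd (corner r s)" and ?Y = "fst (corner s r) \<inter> snd (corner s r)"
  let ?P = "fst r \<inter> snd r" and ?Q = "fst s \<inter> snd s"
  have union: "?X \<union> ?Y \<subseteq> ?P \<union> ?Q" and inter: "?X \<inter> ?Y \<subseteq> ?P \<inter> ?Q"
    unfolding corner_def by auto
  have fin: "finite ?X" "finite ?Y"
    using union assms by (auto intro: finite_subset)
  have "card ?X + card ?Y = card (?X \<union> ?Y) + card (?X \<inter> ?Y)"
    using fin by (rule card_Un_Int)
  also have "\<dots> \<le> card (?P \<union> ?Q) + card (?P \<inter> ?Q)"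
    using union inter assms by (intro add_mono card_mono) auto
  also have "\<dots> = card ?P + card ?Q"
    using assms by (rule card_Un_Int[symmetric])
  finally show ?thesis .
qed

lemma corner_in_Sk:
  assumes "finite V" and "r \<in> Sk V E k" and "s \<in> Sk V E k"
  shows "corner r s \<in> Sk V E k \<or> corner s r \<in> Sk V E k"
proof -
  have seps: "is_sep V E r" "is_sep V E s" and orders: "card (fst r \<inter> snd r) < k" "card (fst s \<inter> snd s) < k"
    using assms(2,3) unfolding Sk_def by auto
  have "finite (fst r \<inter> snd r)" "finite (fst s \<inter> snd s)"
    using assms(1) sep_sides_subset[OF seps(1)] sep_sides_subset[OF seps(2)] by (auto intro: finite_subset)
  then have "card (fst (corner r s) \<inter> snd (corner r s)) < k \<or> card (fst (corner s r) \<inter> snd (corner s r)) < k"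
    using corner_order_submodular orders by fastforce
  then show ?thesis
    using corner_is_sep[OF seps] corner_is_sep[OF seps(2,1)] unfolding Sk_def by auto
qed

lemma covers_corner:
  assumes "simple_graph V E" and "is_sep V E (C, D)" and "C \<in> \<A>"
    and "covers V E (insert A \<A>)"
  shows "covers V E (insert (A \<inter> D) \<A>)"
proof -
  have "C \<union> D = V" using assms(2) unfolding is_sep_def by auto
  then have "A \<inter> D \<union> \<Union>\<A> = V" using assms(3,4) unfolding covers_def by blast
  moreover have "\<exists>X\<in>insert (A \<inter> D) \<A>. e \<subseteq> X" if "e \<in> E" for e
  proof -
    have "e \<subseteq> A \<or> (\<exists>X\<in>\<A>. e \<subseteq> X)" using assms(4) that unfolding covers_def by auto
    moreover have "e \<subseteq> C" if "\<not> e \<subseteq> D"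
      using edge_inside_side[OF assms(1,2) \<open>e \<in> E\<close> that] .
    ultimately show ?thesis using assms(3) by blast
  qed
  ultimately show ?thesis unfolding covers_def by simp
qed

section \<open>Orientations avoiding covering stars\<close>

text \<open>No separation (V, B) can be in O: the singleton {(V, B)} would be a covering star.\<close>
lemma orientation_side_neq_V:
  assumes "simple_graph V E" and "is_orientation V E k Or"
    and "avoids Or (F_star V E k)" and "s \<in> Or"
  shows "fst s \<noteq> V"
proof
  assume "fst s = V"
  then have "covers V E (fst ` {s})"
    using assms(1) unfolding covers_def simple_graph_def by auto
  moreover have "s \<in> Sk V E k" using assms(2,4) unfolding is_orientation_def by blast
  ultimately have "{s} \<in> F_star V E k"
    unfolding F_star_def is_star_def F_cover_iff[OF assms(1)] by auto
  then show False using assms(3,4) unfolding avoids_def by blast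
qed

lemma orientation_down_closed:
  assumes "is_orientation V E k Or" and "consistent V E k Or"
    and no_V: "\<forall>s\<in>Or. fst s \<noteq> V"
    and "t \<in> Sk V E k" and "s \<in> Or" and "sep_le t s"
  shows "t \<in> Or"
proof (rule ccontr)
  assume "t \<notin> Or"
  then have "inv_sep t \<in> Or" using assms(1,4) unfolding is_orientation_def by blast
  have "t \<noteq> s" using \<open>t \<notin> Or\<close> assms(5) by blast
  have "s \<in> Sk V E k" using assms(1,5) unfolding is_orientation_def by blast
  have "s \<noteq> inv_sep t"
  proof
    assume "s = inv_sep t"
    then have "snd s \<subseteq> fst s" using assms(6) unfolding sep_le_def inv_sep_def by auto
    moreover have "fst s \<union> snd s = V"
      using \<open>s \<in> Sk V E k\<close> unfolding Sk_def is_sep_def by (auto split: prod.splits)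
    ultimately show False using no_V assms(5) by blast
  qed
  moreover have "sep_less t s" using assms(6) \<open>t \<noteq> s\<close> unfolding sep_less_def by simp
  ultimately show False
    using assms(2) assms(4) \<open>s \<in> Sk V E k\<close> \<open>t \<noteq> s\<close> \<open>inv_sep t \<in> Or\<close> assms(5)
    unfolding consistent_def by (metis (no_types))
qed

section \<open>The exchange step\<close>

definition weight :: "'a set \<Rightarrow> 'a sep \<Rightarrow> nat" where
  "weight V s = card (fst s) + card (V - snd s)"

lemma weight_strict_mono:
  assumes "finite V" and "is_sep V E t" and "is_sep V E s"
    and "sep_le t s" and "t \<noteq> s"
  shows "weight V t < weight V s"
proof -
  have sub: "fst t \<subseteq> fst s" "V - snd t \<subseteq> V - snd s"
    using assms(4) unfolding sep_le_def by auto
  have fin: "finite (fst s)" "finite (V - snd s)"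
    using assms(1) sep_sides_subset[OF assms(3)] by (auto intro: finite_subset)
  have card_le: "card (fst t) \<le> card (fst s)" "card (V - snd t) \<le> card (V - snd s)"
    using sub fin by (auto intro: card_mono)
  have "fst t \<noteq> fst s \<or> snd t \<noteq> snd s" using assms(5) by (auto simp: prod_eq_iff)
  then consider "fst t \<subset> fst s" | "V - snd t \<subset> V - snd s"
    using sub assms(4) sep_sides_subset[OF assms(2)] unfolding sep_le_def by blast
  then show ?thesis
  proof cases
    case 1
    then have "card (fst t) < card (fst s)" using fin(1) by (rule psubset_card_mono[rotated])
    with card_le show ?thesis unfolding weight_def by simp
  next
    case 2
    then have "card (V - snd t) < card (V - snd s)" using fin(2) by (rule psubset_card_mono[rotated])
    with card_le show ?thesis unfolding weight_def by simp
  qed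
qed

lemma exchange_corner:
  assumes sg: "simple_graph V E" and o: "is_orientation V E k Or" and c: "consistent V E k Or"
    and no_V: "\<forall>s\<in>Or. fst s \<noteq> V"
    and \<sigma>: "\<sigma> \<subseteq> Or" "finite \<sigma>" "covers V E (fst ` \<sigma>)"
    and rs: "r \<in> \<sigma>" "s \<in> \<sigma>" "r \<noteq> s" "\<not> sep_le r (inv_sep s)"
    and corner_Sk: "corner r s \<in> Sk V E k"
  obtains \<sigma>' where "\<sigma>' \<subseteq> Or" "finite \<sigma>'" "\<sigma>' \<noteq> {}" "card \<sigma>' \<le> card \<sigma>"
    "covers V E (fst ` \<sigma>')" "sum (weight V) \<sigma>' < sum (weight V) \<sigma>"
proof -
  let ?t = "corner r s" and ?\<rho> = "\<sigma> - {r}"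
  have in_Sk: "r \<in> Sk V E k" "s \<in> Sk V E k"
    using o \<sigma>(1) rs(1,2) unfolding is_orientation_def by blast+
  then have seps: "is_sep V E r" "is_sep V E s" unfolding Sk_def by auto
  have "?t \<in> Or" using orientation_down_closed[OF o c no_V corner_Sk rs(1)[THEN \<sigma>(1)[THEN subsetD]]]
    by (simp add: corner_le)
  then have sub: "insert ?t ?\<rho> \<subseteq> Or" using \<sigma>(1) by blast
  have fin: "finite (insert ?t ?\<rho>)" and nonempty: "insert ?t ?\<rho> \<noteq> {}"
    using \<sigma>(2) by auto
  have "card (insert ?t ?\<rho>) \<le> Suc (card ?\<rho>)" using \<sigma>(2) by (simp add: card_insert_if)
  also have "\<dots> = card \<sigma>" using \<sigma>(2) rs(1) by (rule card_Suc_Diff1)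
  finally have card: "card (insert ?t ?\<rho>) \<le> card \<sigma>" .
  have "fst ` \<sigma> = insert (fst r) (fst ` ?\<rho>)" using rs(1) by blast
  then have cov_r: "covers V E (insert (fst r) (fst ` ?\<rho>))" using \<sigma>(3) by simp
  have s_mem: "fst s \<in> fst ` ?\<rho>" using rs(2,3) by blast
  have s_sep: "is_sep V E (fst s, snd s)" using seps(2) by simp
  have "covers V E (insert (fst r \<inter> snd s) (fst ` ?\<rho>))"
    using covers_corner[OF sg s_sep s_mem cov_r] .
  then have cov: "covers V E (fst ` insert ?t ?\<rho>)" unfolding corner_def by simp
  have "finite V" using sg unfolding simple_graph_def by blast
  then have "weight V ?t < weight V r"
    using corner_is_sep[OF seps] seps(1) corner_le corner_neq[OF rs(4)] by (rule weight_strict_mono)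
  then have "sum (weight V) (insert ?t ?\<rho>) < weight V r + sum (weight V) ?\<rho>"
    using \<sigma>(2) by (simp add: sum.insert_if)
  also have "\<dots> = sum (weight V) \<sigma>" using \<sigma>(2) rs(1) by (simp add: sum.remove)
  finally have "sum (weight V) (insert ?t ?\<rho>) < sum (weight V) \<sigma>" .
  with sub fin nonempty card cov show thesis by (rule that)
qed

lemma no_covering_subset:
  assumes sg: "simple_graph V E" and o: "is_orientation V E k Or" and c: "consistent V E k Or"
    and av: "avoids Or (F_star V E k)"
    and "\<sigma> \<subseteq> Or" "finite \<sigma>" "\<sigma> \<noteq> {}" "card \<sigma> \<le> 3" "covers V E (fst ` \<sigma>)"
  shows False
  using assms(5-)
proof (induction "sum (weight V) \<sigma>" arbitrary: \<sigma> rule: less_induct)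
  case less
  have no_V: "\<forall>s\<in>Or. fst s \<noteq> V" using orientation_side_neq_V[OF sg o av] by blast
  have in_Sk: "\<sigma> \<subseteq> Sk V E k" using less.prems(1) o unfolding is_orientation_def by blast
  show False
  proof (cases "is_star \<sigma>")
    case True
    then have "\<sigma> \<in> F_star V E k"
      using less.prems in_Sk unfolding F_star_def F_cover_iff[OF sg] by auto
    then show False using av less.prems(1) unfolding avoids_def by blast
  next
    case False
    then obtain r s where rs: "r \<in> \<sigma>" "s \<in> \<sigma>" "r \<noteq> s" "\<not> sep_le r (inv_sep s)"
      using less.prems(3) unfolding is_star_def by blast
    have shrink: False if pair: "r \<in> \<sigma>" "s \<in> \<sigma>" "r \<noteq> s" "\<not> sep_le r (inv_sep s)"
        "corner r s \<in> Sk V E k" for r s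
    proof -
      obtain \<sigma>' where "\<sigma>' \<subseteq> Or" "finite \<sigma>'" "\<sigma>' \<noteq> {}" "card \<sigma>' \<le> card \<sigma>"
        "covers V E (fst ` \<sigma>')" "sum (weight V) \<sigma>' < sum (weight V) \<sigma>"
        using exchange_corner[OF sg o c no_V less.prems(1,2,5) pair] .
      moreover have "card \<sigma>' \<le> 3" using \<open>card \<sigma>' \<le> card \<sigma>\<close> less.prems(4) by linarith
      ultimately show False using less.hyps by blast
    qed
    have "finite V" using sg unfolding simple_graph_def by blast
    then consider "corner r s \<in> Sk V E k" | "corner s r \<in> Sk V E k"
      using corner_in_Sk in_Sk rs(1,2) by blast
    then show False
    proof cases
      case 1
      then show False using shrink rs by blast
    next
      case 2
      then show False using shrink[of s r] rs sep_le_inv_swap by blast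
    qed
  qed
qed

theorem lemma5p2:
  fixes V :: "'a set" and E :: "'a set set" and k :: nat and Or :: "('a set \<times> 'a set) set"
  assumes "simple_graph V E" and "V \<noteq> {}" and "k > 0"
    and "is_orientation V E k Or" and "consistent V E k Or"
    and "avoids Or (F_star V E k)"
  shows "avoids Or (F_cover V E k)"
  unfolding avoids_def
proof (intro allI impI notI)
  fix \<sigma> assume "\<sigma> \<subseteq> Or" and "\<sigma> \<in> F_cover V E k"
  then show False
    using no_covering_subset[OF assms(1,4,5,6)] F_cover_iff[OF assms(1)] by blast
qed

end
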